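(* The Kahan map $\mathcal K$, $\tilde x_i=x_i\dfrac{(1-\epsilon H)(1+\epsilon H)}{(1-\epsilon H+2\epsilon v_{i-1})(1-\epsilon H+2\epsilon v_i)}$ ($i=1,\dots,n$), is a Poisson map with respect to the bracket $\{x_i,x_j\}=x_ix_j$ ($i<j$); that is, $\{\tilde x_i,\tilde x_j\}=\tilde x_i\tilde x_j$ for all $1\le i<j\le n$.
   Context: $(a_1,\dots,a_n)\in\mathbb R^n\setminus\{0\}$, $\epsilon>0$, $H=a_1x_1+\dots+a_nx_n$, $v_0:=0$, $v_i:=a_1x_1+\dots+a_ix_i$. The Poisson bracket on $\mathbb R^n$ is $\{x_i,x_j\}=x_ix_j$ for $1\le i<j\le n$, extended by skew-symmetry and the Leibniz rule to rational functions. *)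

theory Defs
  imports "HOL-Analysis.Analysis"
begin

text \<open>Points of R^n are represented as functions nat => real; only the
coordinates 1..n are used.\<close>

definition partial :: "((nat \<Rightarrow> real) \<Rightarrow> real) \<Rightarrow> nat \<Rightarrow> (nat \<Rightarrow> real) \<Rightarrow> real" where
  "partial f k x = deriv (\<lambda>t. f (x(k := t))) (x k)"

definition pstruct :: "nat \<Rightarrow> nat \<Rightarrow> (nat \<Rightarrow> real) \<Rightarrow> real" where
  "pstruct i j x = (if i < j then x i * x j else if j < i then - (x i * x j) else 0)"

text \<open>Poisson bracket of (rational) functions, via the bivector and partial derivatives
(this is the extension of the bracket by skew-symmetry and Leibniz rule).\<close>
definition pbracket :: "nat \<Rightarrow> ((nat \<Rightarrow> real) \<Rightarrow> real) \<Rightarrow> ((nat \<Rightarrow> real) \<Rightarrow> real)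
    \<Rightarrow> (nat \<Rightarrow> real) \<Rightarrow> real" where
  "pbracket n f g x = (\<Sum>i=1..n. \<Sum>j=1..n. pstruct i j x * partial f i x * partial g j x)"

definition vv :: "(nat \<Rightarrow> real) \<Rightarrow> nat \<Rightarrow> (nat \<Rightarrow> real) \<Rightarrow> real" where
  "vv a i x = (\<Sum>k=1..i. a k * x k)"

definition HH :: "nat \<Rightarrow> (nat \<Rightarrow> real) \<Rightarrow> (nat \<Rightarrow> real) \<Rightarrow> real" where
  "HH n a x = vv a n x"

definition kahan :: "nat \<Rightarrow> (nat \<Rightarrow> real) \<Rightarrow> real \<Rightarrow> nat \<Rightarrow> (nat \<Rightarrow> real) \<Rightarrow> real" where
  "kahan n a \<epsilon> i x = x i * ((1 - \<epsilon> * HH n a x) * (1 + \<epsilon> * HH n a x)) /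
     ((1 - \<epsilon> * HH n a x + 2 * \<epsilon> * vv a (i - 1) x) * (1 - \<epsilon> * HH n a x + 2 * \<epsilon> * vv a i x))"

end

theory Submission
  imports Defs
begin

text \<open>The Kahan image is x'_i = x_i c_i, where c_i is a ratio of products of affine
  functions of x. Its gradient is therefore c_i times the covector
  e_i + \<epsilon> x_i (d_0 \<nabla>v_{i-1} + d_1 \<nabla>v_i + d_n \<nabla>H), the d's being the logarithmic
  derivatives of the factors of c_i. The bracket pairs gradients bilinearly, and the pairings
  of the building blocks are explicit: {x_i, v_m} = x_i (v_m - v_i - v_{i-1}) for m \<ge> i,
  {x_i, v_m} = -x_i v_m for m < i, and {v_m, v_p} = v_m (v_p - v_m) for m \<le> p. Hence
  {x'_i, x'_j} = c_i c_j x_i x_j (1 + T), where T is a rational function of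
  \<epsilon>H, \<epsilon>v_{i-1}, \<epsilon>v_i, \<epsilon>v_{j-1}, \<epsilon>v_j that vanishes identically.\<close>

definition unit_vec :: "nat \<Rightarrow> nat \<Rightarrow> real" where
  "unit_vec i k = (if k = i then 1 else 0)"

definition vv_grad :: "(nat \<Rightarrow> real) \<Rightarrow> nat \<Rightarrow> nat \<Rightarrow> real" where
  "vv_grad a m k = (if k \<le> m then a k else 0)"

definition poisson_pairing :: "nat \<Rightarrow> (nat \<Rightarrow> real) \<Rightarrow> (nat \<Rightarrow> real) \<Rightarrow> (nat \<Rightarrow> real) \<Rightarrow> real" where
  "poisson_pairing n x u w = (\<Sum>k=1..n. \<Sum>l=1..n. pstruct k l x * u k * w l)"

lemma vv_Suc: "vv a (Suc m) x = vv a m x + a (Suc m) * x (Suc m)"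
  by (simp add: vv_def)

lemma vv_fun_upd:
  assumes "1 \<le> k"
  shows "vv a m (x(k := t)) = vv a m x + vv_grad a m k * (t - x k)"
proof -
  have "vv a m (x(k := t)) - vv a m x = (\<Sum>l=1..m. if l = k then a k * (t - x k) else 0)"
    unfolding vv_def sum_subtractf[symmetric] by (rule sum.cong) (auto simp: algebra_simps)
  then show ?thesis using assms by (auto simp: vv_grad_def)
qed

lemma sum_vv_grad: "m \<le> n \<Longrightarrow> (\<Sum>l=1..n. f l * vv_grad a m l) = (\<Sum>l=1..m. f l * a l)"
  by (rule sum.mono_neutral_cong_right) (auto simp: vv_grad_def)

lemma pbracket_eq_poisson_pairing:
  "pbracket n f g x = poisson_pairing n x (\<lambda>k. partial f k x) (\<lambda>k. partial g k x)"
  unfolding pbracket_def poisson_pairing_def ..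

lemma poisson_pairing_cong:
  "(\<And>k. k \<in> {1..n} \<Longrightarrow> u k = u' k) \<Longrightarrow> (\<And>k. k \<in> {1..n} \<Longrightarrow> w k = w' k) \<Longrightarrow>
    poisson_pairing n x u w = poisson_pairing n x u' w'"
  unfolding poisson_pairing_def by (intro sum.cong refl) auto

lemma poisson_pairing_add_left [simp]:
  "poisson_pairing n x (\<lambda>k. u k + u' k) w = poisson_pairing n x u w + poisson_pairing n x u' w"
  unfolding poisson_pairing_def by (simp add: distrib_left distrib_right sum.distrib)

lemma poisson_pairing_add_right [simp]:
  "poisson_pairing n x u (\<lambda>k. w k + w' k) = poisson_pairing n x u w + poisson_pairing n x u w'"
  unfolding poisson_pairing_def by (simp add: distrib_left sum.distrib)

lemma poisson_pairing_scale_left [simp]: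
  "poisson_pairing n x (\<lambda>k. c * u k) w = c * poisson_pairing n x u w"
  unfolding poisson_pairing_def by (simp add: sum_distrib_left mult_ac)

lemma poisson_pairing_scale_right [simp]:
  "poisson_pairing n x u (\<lambda>k. c * w k) = c * poisson_pairing n x u w"
  unfolding poisson_pairing_def by (simp add: sum_distrib_left mult_ac)

lemma poisson_pairing_swap: "poisson_pairing n x u w = - poisson_pairing n x w u"
proof -
  have "poisson_pairing n x w u = (\<Sum>k=1..n. \<Sum>l=1..n. pstruct l k x * w l * u k)"
    unfolding poisson_pairing_def by (rule sum.swap)
  also have "\<dots> = (\<Sum>k=1..n. \<Sum>l=1..n. - (pstruct k l x * u k * w l))"
    by (intro sum.cong refl) (auto simp: pstruct_def)
  also have "\<dots> = - poisson_pairing n x u w"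
    by (simp add: poisson_pairing_def sum_negf)
  finally show ?thesis by simp
qed

lemma poisson_pairing_unit_left:
  assumes "i \<in> {1..n}"
  shows "poisson_pairing n x (unit_vec i) w = (\<Sum>l=1..n. pstruct i l x * w l)"
proof -
  have "poisson_pairing n x (unit_vec i) w
      = (\<Sum>k=1..n. if k = i then (\<Sum>l=1..n. pstruct i l x * w l) else 0)"
    unfolding poisson_pairing_def by (rule sum.cong) (auto simp: unit_vec_def)
  then show ?thesis using assms by simp
qed

lemma poisson_pairing_unit_unit:
  assumes "i \<in> {1..n}" "j \<in> {1..n}"
  shows "poisson_pairing n x (unit_vec i) (unit_vec j) = pstruct i j x"
proof -
  have "poisson_pairing n x (unit_vec i) (unit_vec j)
      = (\<Sum>l=1..n. if l = j then pstruct i j x else 0)"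
    unfolding poisson_pairing_unit_left[OF assms(1)] by (rule sum.cong) (auto simp: unit_vec_def)
  then show ?thesis using assms(2) by simp
qed

lemma sum_pstruct_times_coeffs:
  assumes "1 \<le> i"
  shows "(\<Sum>l=1..m. pstruct i l x * a l) =
    x i * (if i \<le> m then vv a m x - vv a i x - vv a (i - 1) x else - vv a m x)"
proof (induction m)
  case 0
  then show ?case using assms by (simp add: vv_def)
next
  case (Suc m)
  then show ?case
    by (cases "Suc m" i rule: linorder_cases) (auto simp: vv_Suc pstruct_def algebra_simps)
qed

lemma poisson_pairing_unit_vv_grad:
  "1 \<le> i \<Longrightarrow> i \<le> n \<Longrightarrow> m \<le> n \<Longrightarrow> poisson_pairing n x (unit_vec i) (vv_grad a m) =
    x i * (if i \<le> m then vv a m x - vv a i x - vv a (i - 1) x else - vv a m x)"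
  by (simp only: poisson_pairing_unit_left sum_vv_grad sum_pstruct_times_coeffs atLeastAtMost_iff)

lemma sum_vv_increments_telescope:
  "m \<le> p \<Longrightarrow>
    (\<Sum>k=1..m. x k * (vv a p x - vv a k x - vv a (k - 1) x) * a k) = vv a m x * (vv a p x - vv a m x)"
  by (induction m) (simp_all add: vv_def vv_Suc algebra_simps)

lemma poisson_pairing_vv_grad_vv_grad:
  assumes "m \<le> p" "p \<le> n"
  shows "poisson_pairing n x (vv_grad a m) (vv_grad a p) = vv a m x * (vv a p x - vv a m x)"
proof -
  have "poisson_pairing n x (vv_grad a m) (vv_grad a p)
      = (\<Sum>k=1..n. (\<Sum>l=1..n. pstruct k l x * vv_grad a p l) * vv_grad a m k)"
    unfolding poisson_pairing_def sum_distrib_right by (simp add: mult_ac)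
  also have "\<dots> = (\<Sum>k=1..m. (\<Sum>l=1..p. pstruct k l x * a l) * a k)"
    using assms by (simp only: sum_vv_grad order_trans)
  also have "\<dots> = (\<Sum>k=1..m. x k * (vv a p x - vv a k x - vv a (k - 1) x) * a k)"
    using assms by (intro sum.cong refl) (subst sum_pstruct_times_coeffs; auto)
  also have "\<dots> = vv a m x * (vv a p x - vv a m x)"
    using assms(1) by (rule sum_vv_increments_telescope)
  finally show ?thesis .
qed

(* \<epsilon>/x_i times the pairing of a Kahan covector with \<nabla>v_q, as a function of y = \<epsilon> v_q *)
definition kahan_cross :: "real \<Rightarrow> real \<Rightarrow> real \<Rightarrow> real \<Rightarrow> real \<Rightarrow> real \<Rightarrow> real \<Rightarrow> real" where
  "kahan_cross E e0 e1 d0 d1 dn y =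
     y - e0 - e1 + d0 * e0 * (y - e0) + d1 * e1 * (y - e1) - dn * y * (E - y)"

lemma kahan_cross_closed_form:
  fixes \<epsilon> H v0 v1 dn y :: real
  defines "A \<equiv> 1 - \<epsilon> * H"
    and "P \<equiv> 1 - \<epsilon> * H + 2 * \<epsilon> * v0" and "Q \<equiv> 1 - \<epsilon> * H + 2 * \<epsilon> * v1"
  assumes "P \<noteq> 0" "Q \<noteq> 0"
  shows "kahan_cross (\<epsilon> * H) (\<epsilon> * v0) (\<epsilon> * v1) (-2 / P) (-2 / Q) dn y
    = (A * (1 / P + 1 / Q) - 1) * (A + 2 * y) / 2 - A / 2 - dn * y * (\<epsilon> * H - y)"
proof -
  have scaled: "\<epsilon> * H = 1 - A" "\<epsilon> * v0 = (P - A) / 2" "\<epsilon> * v1 = (Q - A) / 2"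
    by (simp_all add: A_def P_def Q_def)
  show ?thesis
    using assms(4,5) unfolding kahan_cross_def scaled by (simp add: field_simps)
qed

lemma kahan_cross_sum_zero:
  fixes \<epsilon> H v0 v1 w0 w1 :: real
  defines "A \<equiv> 1 - \<epsilon> * H" and "B \<equiv> 1 + \<epsilon> * H"
    and "P \<equiv> 1 - \<epsilon> * H + 2 * \<epsilon> * v0" and "Q \<equiv> 1 - \<epsilon> * H + 2 * \<epsilon> * v1"
    and "R \<equiv> 1 - \<epsilon> * H + 2 * \<epsilon> * w0" and "S \<equiv> 1 - \<epsilon> * H + 2 * \<epsilon> * w1"
  defines "dn \<equiv> 1 / B - 1 / A + 1 / P + 1 / Q" and "cn \<equiv> 1 / B - 1 / A + 1 / R + 1 / S"
  defines "\<phi> \<equiv> kahan_cross (\<epsilon> * H) (\<epsilon> * v0) (\<epsilon> * v1) (-2 / P) (-2 / Q) dn"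
  assumes nz: "A \<noteq> 0" "B \<noteq> 0" "P \<noteq> 0" "Q \<noteq> 0" "R \<noteq> 0" "S \<noteq> 0"
  shows "-2 / P * (\<epsilon> * v0) + -2 / Q * (\<epsilon> * v1) - dn * (\<epsilon> * H - \<epsilon> * w0 - \<epsilon> * w1)
    + -2 / R * \<phi> (\<epsilon> * w0) + -2 / S * \<phi> (\<epsilon> * w1) + cn * \<phi> (\<epsilon> * H) = 0"
proof -
  define \<Sigma> \<Sigma>' where "\<Sigma> = 1 / P + 1 / Q" and "\<Sigma>' = 1 / R + 1 / S"
  have B: "B = 2 - A" and scaled: "\<epsilon> * H = 1 - A" "\<epsilon> * v0 = (P - A) / 2" "\<epsilon> * v1 = (Q - A) / 2"
      "\<epsilon> * w0 = (R - A) / 2" "\<epsilon> * w1 = (S - A) / 2"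
    by (simp_all add: A_def B_def P_def Q_def R_def S_def)
  have \<phi>: "\<phi> y = (A * \<Sigma> - 1) * (A + 2 * y) / 2 - A / 2 - dn * y * (1 - A - y)" for y
    using kahan_cross_closed_form[OF nz(3,4)[unfolded P_def Q_def]]
    unfolding \<phi>_def \<Sigma>_def A_def P_def Q_def by simp
  have "-2 / P * (\<epsilon> * v0) + -2 / Q * (\<epsilon> * v1) = A * \<Sigma> - 2"
    using nz(3,4) unfolding \<Sigma>_def scaled by (simp add: field_simps)
  moreover have "-2 / R * \<phi> (\<epsilon> * w0) = 1 - A * \<Sigma> + A / R + dn * (R - A) * (B - R) / (2 * R)"
    using nz(5) unfolding \<phi> scaled B by (simp add: field_simps)
  moreover have "-2 / S * \<phi> (\<epsilon> * w1) = 1 - A * \<Sigma> + A / S + dn * (S - A) * (B - S) / (2 * S)"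
    using nz(6) unfolding \<phi> scaled B by (simp add: field_simps)
  moreover have \<phi>_H: "\<phi> (\<epsilon> * H) = (A * \<Sigma> - 1) * B / 2 - A / 2"
    unfolding \<phi> scaled B by (simp add: algebra_simps)
  moreover have "- dn * (\<epsilon> * H - \<epsilon> * w0 - \<epsilon> * w1) + dn * (R - A) * (B - R) / (2 * R)
      + dn * (S - A) * (B - S) / (2 * S) = dn * (1 - A * B * \<Sigma>' / 2)"
    using nz(5,6) unfolding \<Sigma>'_def scaled B by (simp add: field_simps)
  moreover have "A / R + A / S - A * \<Sigma> + dn * (1 - A * B * \<Sigma>' / 2)
      + cn * ((A * \<Sigma> - 1) * B / 2 - A / 2) = 0"
  proof -
    have coeffs: "A / R + A / S = A * \<Sigma>'" "dn = 1 / B - 1 / A + \<Sigma>" "cn = 1 / B - 1 / A + \<Sigma>'"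
      by (simp_all add: dn_def cn_def \<Sigma>_def \<Sigma>'_def field_simps)
    show ?thesis using nz(1,2) unfolding coeffs unfolding B by (simp add: field_simps)
  qed
  ultimately show ?thesis unfolding \<phi>_H by linarith
qed

definition kahan_covector :: "nat \<Rightarrow> (nat \<Rightarrow> real) \<Rightarrow> real \<Rightarrow> (nat \<Rightarrow> real) \<Rightarrow> nat
    \<Rightarrow> real \<Rightarrow> real \<Rightarrow> real \<Rightarrow> nat \<Rightarrow> real" where
  "kahan_covector n a \<epsilon> x i d0 d1 dn =
     (\<lambda>k. unit_vec i k + \<epsilon> * x i * (d0 * vv_grad a (i - 1) k + d1 * vv_grad a i k + dn * vv_grad a n k))"

lemma poisson_pairing_kahan_covector_unit:
  assumes "1 \<le> i" "i < j" "j \<le> n"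
  shows "poisson_pairing n x (kahan_covector n a \<epsilon> x i d0 d1 dn) (unit_vec j) =
    x i * x j * (1 + d0 * (\<epsilon> * vv a (i - 1) x) + d1 * (\<epsilon> * vv a i x)
      - dn * (\<epsilon> * vv a n x - \<epsilon> * vv a (j - 1) x - \<epsilon> * vv a j x))"
proof -
  have swapped: "poisson_pairing n x (vv_grad a (i - 1)) (unit_vec j) = x j * vv a (i - 1) x"
    "poisson_pairing n x (vv_grad a i) (unit_vec j) = x j * vv a i x"
    "poisson_pairing n x (vv_grad a n) (unit_vec j) = x j * (vv a j x + vv a (j - 1) x - vv a n x)"
    using assms
    by (subst poisson_pairing_swap, subst poisson_pairing_unit_vv_grad; auto simp: algebra_simps)+
  show ?thesis
    using assms unfolding kahan_covector_def poisson_pairing_add_left poisson_pairing_scale_left swapped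
    by (simp add: poisson_pairing_unit_unit pstruct_def algebra_simps)
qed

lemma poisson_pairing_kahan_covector_vv_grad:
  assumes "1 \<le> i" "i \<le> q" "q \<le> n"
  shows "\<epsilon> * poisson_pairing n x (kahan_covector n a \<epsilon> x i d0 d1 dn) (vv_grad a q) =
    x i * kahan_cross (\<epsilon> * vv a n x) (\<epsilon> * vv a (i - 1) x) (\<epsilon> * vv a i x) d0 d1 dn (\<epsilon> * vv a q x)"
proof -
  have pairing_H:
    "poisson_pairing n x (vv_grad a n) (vv_grad a q) = - (vv a q x * (vv a n x - vv a q x))"
    using assms by (subst poisson_pairing_swap, subst poisson_pairing_vv_grad_vv_grad) auto
  show ?thesis
    using assms unfolding kahan_covector_def kahan_cross_def
    by (simp add: pairing_H poisson_pairing_unit_vv_grad poisson_pairing_vv_grad_vv_grad algebra_simps)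
qed

lemma poisson_pairing_kahan_covectors:
  fixes n i j :: nat and a x :: "nat \<Rightarrow> real" and \<epsilon> d0 d1 dn c0 c1 cn :: real
  defines "E \<equiv> \<epsilon> * vv a n x"
    and "e0 \<equiv> \<epsilon> * vv a (i - 1) x" and "e1 \<equiv> \<epsilon> * vv a i x"
    and "f0 \<equiv> \<epsilon> * vv a (j - 1) x" and "f1 \<equiv> \<epsilon> * vv a j x"
  assumes "1 \<le> i" "i < j" "j \<le> n"
  shows "poisson_pairing n x (kahan_covector n a \<epsilon> x i d0 d1 dn) (kahan_covector n a \<epsilon> x j c0 c1 cn) =
    x i * x j * (1 + (d0 * e0 + d1 * e1 - dn * (E - f0 - f1)
      + c0 * kahan_cross E e0 e1 d0 d1 dn f0 + c1 * kahan_cross E e0 e1 d0 d1 dn f1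
      + cn * kahan_cross E e0 e1 d0 d1 dn E))" (is "_ = ?rhs")
proof -
  let ?L = "kahan_covector n a \<epsilon> x i d0 d1 dn"
  have "poisson_pairing n x ?L (kahan_covector n a \<epsilon> x j c0 c1 cn)
      = poisson_pairing n x ?L (unit_vec j)
        + x j * (c0 * (\<epsilon> * poisson_pairing n x ?L (vv_grad a (j - 1)))
          + c1 * (\<epsilon> * poisson_pairing n x ?L (vv_grad a j))
          + cn * (\<epsilon> * poisson_pairing n x ?L (vv_grad a n)))"
    unfolding kahan_covector_def[of n a \<epsilon> x j] poisson_pairing_add_right poisson_pairing_scale_right
    by (simp add: algebra_simps)
  also have "\<dots> = ?rhs"
    using assms(6-8) unfolding assms(1-5)
    by (simp add: poisson_pairing_kahan_covector_unit poisson_pairing_kahan_covector_vv_grad algebra_simps)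
  finally show ?thesis .
qed

lemma has_real_derivative_affine_ratio:
  fixes X \<xi> A \<alpha> B \<beta> P \<gamma> Q \<delta> t0 :: real
  assumes "P \<noteq> 0" "Q \<noteq> 0"
  shows "((\<lambda>t. (X + \<xi> * (t - t0)) * ((A + \<alpha> * (t - t0)) * (B + \<beta> * (t - t0)))
      / ((P + \<gamma> * (t - t0)) * (Q + \<delta> * (t - t0))))
    has_real_derivative (\<xi> * (A * B) / (P * Q) + X * (\<alpha> * B + A * \<beta>) / (P * Q)
      - X * (A * B) * (\<gamma> * Q + P * \<delta>) / (P * Q)\<^sup>2)) (at t0)"
  using assms by (auto intro!: derivative_eq_intros simp: field_simps power2_eq_square)

lemma partial_kahan:
  fixes n i k :: nat and a x :: "nat \<Rightarrow> real" and \<epsilon> :: real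
  defines "A \<equiv> 1 - \<epsilon> * vv a n x" and "B \<equiv> 1 + \<epsilon> * vv a n x"
    and "D m \<equiv> 1 - \<epsilon> * vv a n x + 2 * \<epsilon> * vv a m x"
  assumes "1 \<le> k" "A \<noteq> 0" "B \<noteq> 0" "D (i - 1) \<noteq> 0" "D i \<noteq> 0"
  shows "partial (kahan n a \<epsilon> i) k x = A * B / (D (i - 1) * D i) *
    kahan_covector n a \<epsilon> x i (-2 / D (i - 1)) (-2 / D i) (1 / B - 1 / A + 1 / D (i - 1) + 1 / D i) k"
proof -
  define P Q where "P = D (i - 1)" and "Q = D i"
  define g0 g1 gn where "g0 = vv_grad a (i - 1) k" and "g1 = vv_grad a i k" and "gn = vv_grad a n k"
  have along_line: "kahan n a \<epsilon> i (x(k := t)) =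
      (x i + unit_vec i k * (t - x k)) * ((A + (- \<epsilon> * gn) * (t - x k)) * (B + \<epsilon> * gn * (t - x k)))
      / ((P + (2 * \<epsilon> * g0 - \<epsilon> * gn) * (t - x k)) * (Q + (2 * \<epsilon> * g1 - \<epsilon> * gn) * (t - x k)))" for t
    using assms(4) unfolding kahan_def HH_def A_def B_def P_def Q_def D_def g0_def g1_def gn_def
    by (simp add: vv_fun_upd unit_vec_def algebra_simps)
  have "partial (kahan n a \<epsilon> i) k x = unit_vec i k * (A * B) / (P * Q)
      + x i * ((- \<epsilon> * gn) * B + A * (\<epsilon> * gn)) / (P * Q)
      - x i * (A * B) * ((2 * \<epsilon> * g0 - \<epsilon> * gn) * Q + P * (2 * \<epsilon> * g1 - \<epsilon> * gn)) / (P * Q)\<^sup>2"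
    unfolding partial_def along_line
    by (rule DERIV_imp_deriv, rule has_real_derivative_affine_ratio[OF assms(7,8)[folded P_def Q_def]])
  also have "\<dots> = A * B / (P * Q) *
      kahan_covector n a \<epsilon> x i (-2 / P) (-2 / Q) (1 / B - 1 / A + 1 / P + 1 / Q) k"
    using assms(5-8)[folded P_def Q_def]
    unfolding kahan_covector_def g0_def[symmetric] g1_def[symmetric] gn_def[symmetric]
    by (simp add: field_simps power2_eq_square)
  finally show ?thesis unfolding P_def Q_def .
qed

lemma poisson_pairing_kahan_gradients:
  fixes n i j :: nat and a x :: "nat \<Rightarrow> real" and \<epsilon> :: real
  defines "A \<equiv> 1 - \<epsilon> * vv a n x" and "B \<equiv> 1 + \<epsilon> * vv a n x"
    and "D m \<equiv> 1 - \<epsilon> * vv a n x + 2 * \<epsilon> * vv a m x"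
  assumes "1 \<le> i" "i < j" "j \<le> n"
    and "A \<noteq> 0" "B \<noteq> 0" "D (i - 1) \<noteq> 0" "D i \<noteq> 0" "D (j - 1) \<noteq> 0" "D j \<noteq> 0"
  shows "poisson_pairing n x
    (kahan_covector n a \<epsilon> x i (-2 / D (i - 1)) (-2 / D i) (1 / B - 1 / A + 1 / D (i - 1) + 1 / D i))
    (kahan_covector n a \<epsilon> x j (-2 / D (j - 1)) (-2 / D j) (1 / B - 1 / A + 1 / D (j - 1) + 1 / D j))
    = x i * x j"
  unfolding A_def B_def D_def poisson_pairing_kahan_covectors[OF assms(4-6)]
    kahan_cross_sum_zero[OF assms(7-12)[unfolded A_def B_def D_def]]
  by simp

theorem proposition3p2:
  fixes n :: nat and a x :: "nat \<Rightarrow> real" and \<epsilon> :: real and i j :: nat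
  assumes "\<exists>k\<in>{1..n}. a k \<noteq> 0"
    and "\<epsilon> > 0"
    and "\<forall>k\<le>n. 1 - \<epsilon> * HH n a x + 2 * \<epsilon> * vv a k x \<noteq> 0"
    and "1 \<le> i" and "i < j" and "j \<le> n"
  shows "pbracket n (kahan n a \<epsilon> i) (kahan n a \<epsilon> j) x = kahan n a \<epsilon> i x * kahan n a \<epsilon> j x"
proof -
  define A B D where "A = 1 - \<epsilon> * vv a n x" and "B = 1 + \<epsilon> * vv a n x"
    and "D m = 1 - \<epsilon> * vv a n x + 2 * \<epsilon> * vv a m x" for m
  have D: "D m \<noteq> 0" if "m \<le> n" for m
    using assms(3) that unfolding D_def HH_def by blast
  have nonzero: "A \<noteq> 0" "B \<noteq> 0" "D (i - 1) \<noteq> 0" "D i \<noteq> 0" "D (j - 1) \<noteq> 0" "D j \<noteq> 0"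
    using D[of 0] D[of n] D assms(5,6) by (simp_all add: A_def B_def D_def vv_def)
  define c cov where "c m = A * B / (D (m - 1) * D m)"
    and "cov m = kahan_covector n a \<epsilon> x m (-2 / D (m - 1)) (-2 / D m)
      (1 / B - 1 / A + 1 / D (m - 1) + 1 / D m)" for m
  have "pbracket n (kahan n a \<epsilon> i) (kahan n a \<epsilon> j) x
      = poisson_pairing n x (\<lambda>k. c i * cov i k) (\<lambda>k. c j * cov j k)"
    unfolding pbracket_eq_poisson_pairing using assms(4-6) nonzero
    by (intro poisson_pairing_cong) (auto simp: c_def cov_def A_def B_def D_def partial_kahan)
  also have "\<dots> = c i * c j * (x i * x j)"
    using poisson_pairing_kahan_gradients[OF assms(4-6) nonzero[unfolded A_def B_def D_def]]
    unfolding cov_def A_def B_def D_def by simp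
  also have "\<dots> = kahan n a \<epsilon> i x * kahan n a \<epsilon> j x"
    by (simp add: kahan_def c_def A_def B_def D_def HH_def)
  finally show ?thesis .
qed

end
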